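(* Let $S$ be an additively cancellative, semisubtractive, centrally essential semiring with center $C=C(S)$. The following conditions are equivalent: (1) $S$ is a semiprime semiring; (2) $C$ is a semiprime semiring; (3) $S$ has no non-zero nilpotent elements; (4) $S$ is a commutative semiring without non-zero nilpotent elements.
   Context: A semiring is a set $S$ with two binary operations $+$ and $\cdot$ such that $(S,+)$ is a commutative monoid with neutral element $0$, $(S,\cdot)$ is a monoid with identity $1$, multiplication distributes over addition on both sides, and $0s=s0=0$ for all $s\in S$. The center is $C(S)=\{s\in S: ss'=s's \text{ for all } s'\in S\}$, a subsemiring. $S$ is centrally essential if for every non-zero $x\in S$ there exist non-zero $y,z\in C(S)$ with $xy=z$. $S$ is additively cancellative if $x+z=y+z$ implies $x=y$. $S$ is semisubtractive if for all $a\neq b$ in $S$ there exists $x\in S$ with $a+x=b$ or $b+x=a$. A semiring is semiprime if it has no non-zero nilpotent ideals. *)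

theory Defs
  imports Main
begin

text \<open>Semirings: type class semiring_0 (commutative additive monoid, associative
multiplication, two-sided distributivity, absorbing zero) together with
monoid_mult (multiplicative identity). 0 = 1 is not excluded, as in the paper.\<close>

definition center :: "'a::{semiring_0,monoid_mult} set" where
  "center = {s. \<forall>t. s * t = t * s}"

definition centrally_essential :: "'a::{semiring_0,monoid_mult} itself \<Rightarrow> bool" where
  "centrally_essential _ \<longleftrightarrow>
     (\<forall>x::'a. x \<noteq> 0 \<longrightarrow> (\<exists>y z. y \<in> center \<and> z \<in> center \<and> y \<noteq> 0 \<and> z \<noteq> 0 \<and> x * y = z))"

definition add_cancellative :: "'a::{semiring_0,monoid_mult} itself \<Rightarrow> bool" where
  "add_cancellative _ \<longleftrightarrow> (\<forall>x y z::'a. x + z = y + z \<longrightarrow> x = y)"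

definition semisubtractive :: "'a::{semiring_0,monoid_mult} itself \<Rightarrow> bool" where
  "semisubtractive _ \<longleftrightarrow> (\<forall>a b::'a. a \<noteq> b \<longrightarrow> (\<exists>x. a + x = b \<or> b + x = a))"

definition ideal_in :: "'a::{semiring_0,monoid_mult} set \<Rightarrow> 'a set \<Rightarrow> bool" where
  "ideal_in R I \<longleftrightarrow> I \<subseteq> R \<and> 0 \<in> I \<and> (\<forall>x\<in>I. \<forall>y\<in>I. x + y \<in> I)
     \<and> (\<forall>r\<in>R. \<forall>x\<in>I. r * x \<in> I \<and> x * r \<in> I)"

text \<open>I is nilpotent: I^n = 0 for some n \<ge> 1, i.e. every product of n elements of I is 0
(I^n is additively generated by such products).\<close>
definition nilpotent_ideal :: "'a::{semiring_0,monoid_mult} set \<Rightarrow> bool" where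
  "nilpotent_ideal I \<longleftrightarrow>
     (\<exists>n\<ge>1. \<forall>xs. length xs = n \<and> set xs \<subseteq> I \<longrightarrow> prod_list xs = 0)"

definition semiprime_on :: "'a::{semiring_0,monoid_mult} set \<Rightarrow> bool" where
  "semiprime_on R \<longleftrightarrow> (\<forall>I. ideal_in R I \<and> nilpotent_ideal I \<longrightarrow> I = {0})"

definition no_nonzero_nilpotents :: "'a::{semiring_0,monoid_mult} itself \<Rightarrow> bool" where
  "no_nonzero_nilpotents _ \<longleftrightarrow> (\<forall>x::'a. (\<exists>n. x ^ n = 0) \<longrightarrow> x = 0)"

definition commutative_mult :: "'a::{semiring_0,monoid_mult} itself \<Rightarrow> bool" where
  "commutative_mult _ \<longleftrightarrow> (\<forall>x y::'a. x * y = y * x)"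

end

theory Submission
  imports Defs
begin

text \<open>If S has no non-zero nilpotent elements, no non-zero ideal of any subsemiring is nilpotent,
since x \<in> I with I^n = 0 gives x^n = 0. Conversely, if a central element c is nilpotent, then
the ideal cR of a subsemiring R containing c is nilpotent, because (cR)^n \<subseteq> c^n R; so
semiprimeness of S or of C forces all central nilpotents to vanish, and central essentiality
transports this to all of S: if x^n = 0 and xy = z with y, z central, z \<noteq> 0, then z^n = x^n y^n = 0.

For commutativity, semisubtractivity reduces to showing that ab + x = ba forces x = 0.
Multiplying by a central element we may assume x = z is central. Then (az)b + z^2 = b(az); if
az = 0 this makes z^2 = 0, and otherwise choosing c central with azc = w central non-zero and
cancelling wb in wb + z^2c = wb gives z^2c = 0, whence w^2 = a^2 (z^2 c) c = 0, a contradiction.\<close>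

definition subsemiring :: "'a::{semiring_0,monoid_mult} set \<Rightarrow> bool" where
  "subsemiring R \<longleftrightarrow> 0 \<in> R \<and> 1 \<in> R \<and> (\<forall>a\<in>R. \<forall>b\<in>R. a + b \<in> R \<and> a * b \<in> R)"

lemma center_iff: "c \<in> center \<longleftrightarrow> (\<forall>t. c * t = t * c)"
  by (simp add: center_def)

lemma center_commute: "c \<in> center \<Longrightarrow> s * c = c * s"
  by (simp add: center_iff)

lemma zero_in_center: "0 \<in> center"
  and one_in_center: "1 \<in> center"
  by (simp_all add: center_iff)

lemma add_in_center: "a \<in> center \<Longrightarrow> b \<in> center \<Longrightarrow> a + b \<in> center"
  by (simp add: center_iff distrib_left distrib_right)

lemma mult_in_center:
  assumes "a \<in> center" "b \<in> center"
  shows "a * b \<in> center"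
  unfolding center_iff
proof
  fix t
  have "a * b * t = a * t * b"
    by (simp add: mult.assoc center_commute[OF assms(2), of t, symmetric])
  also have "\<dots> = t * (a * b)"
    by (simp add: mult.assoc center_commute[OF assms(1), of t, symmetric])
  finally show "a * b * t = t * (a * b)" .
qed

lemma power_in_center: "c \<in> center \<Longrightarrow> c ^ n \<in> center"
  by (induction n) (simp_all add: one_in_center mult_in_center)

lemma power_mult_central:
  assumes "y \<in> center"
  shows "(x * y) ^ n = x ^ n * y ^ n"
proof (induction n)
  case (Suc n)
  have "(x * y) ^ Suc n = x * (y * x ^ n) * y ^ n"
    by (simp add: Suc mult.assoc)
  also have "\<dots> = x ^ Suc n * y ^ Suc n"
    by (simp add: center_commute[OF assms, of "x ^ n", symmetric] mult.assoc)
  finally show ?case .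
qed simp

lemma subsemiring_UNIV: "subsemiring UNIV"
  by (simp add: subsemiring_def)

lemma subsemiring_center: "subsemiring center"
  by (simp add: subsemiring_def zero_in_center one_in_center add_in_center mult_in_center)

lemma square_eq_0_imp_eq_0:
  assumes "no_nonzero_nilpotents TYPE('a::{semiring_0,monoid_mult})" and "(x::'a) * x = 0"
  shows "x = 0"
  using assms unfolding no_nonzero_nilpotents_def by (metis power2_eq_square)

lemma add_right_eq_self_imp_eq_0:
  assumes "add_cancellative TYPE('a::{semiring_0,monoid_mult})" and "(x::'a) + y = x"
  shows "y = 0"
  using assms unfolding add_cancellative_def by (metis add.commute add_0)

lemma semiprime_on_if_no_nonzero_nilpotents:
  assumes "no_nonzero_nilpotents TYPE('a::{semiring_0,monoid_mult})"
  shows "semiprime_on (R :: 'a set)"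
  unfolding semiprime_on_def
proof (intro allI impI)
  fix I :: "'a set"
  assume I: "ideal_in R I \<and> nilpotent_ideal I"
  then obtain n where n: "\<And>xs. length xs = n \<Longrightarrow> set xs \<subseteq> I \<Longrightarrow> prod_list xs = 0"
    unfolding nilpotent_ideal_def by blast
  have "x = 0" if "x \<in> I" for x
  proof -
    have "x ^ n = 0"
      using n[of "replicate n x"] that by (simp add: set_replicate_conv_if)
    then show ?thesis
      using assms unfolding no_nonzero_nilpotents_def by blast
  qed
  moreover have "0 \<in> I"
    using I unfolding ideal_in_def by blast
  ultimately show "I = {0}" by blast
qed

lemma principal_ideal_central:
  assumes "subsemiring R" "c \<in> R" "c \<in> center"
  shows "ideal_in R ((*) c ` R)"
proof -
  have "r * (c * t) = c * (r * t)" for r t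
    by (metis center_commute[OF assms(3)] mult.assoc)
  moreover have "c * t + c * t' = c * (t + t')" for t t'
    by (simp add: distrib_left)
  moreover have "0 \<in> (*) c ` R"
    using assms(1) unfolding subsemiring_def by (metis image_eqI mult_zero_right)
  ultimately show ?thesis
    using assms(1,2) unfolding ideal_in_def subsemiring_def
    by (auto simp: mult.assoc image_iff)
qed

lemma prod_list_principal_ideal_central:
  assumes "subsemiring R" "c \<in> center" "set xs \<subseteq> (*) c ` R"
  shows "\<exists>t\<in>R. prod_list xs = c ^ length xs * t"
  using assms(3)
proof (induction xs)
  case Nil
  then show ?case
    using assms(1) unfolding subsemiring_def by force
next
  case (Cons x xs)
  then obtain t where t: "t \<in> R" "prod_list xs = c ^ length xs * t" by auto
  obtain s where s: "s \<in> R" "x = c * s"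
    using Cons.prems by auto
  have "prod_list (x # xs) = c * (s * c ^ length xs) * t"
    by (simp add: s t mult.assoc)
  also have "\<dots> = c ^ length (x # xs) * (s * t)"
    using center_commute[OF power_in_center[OF assms(2)], of s "length xs"]
    by (simp add: mult.assoc)
  finally show ?case
    using s t assms(1) unfolding subsemiring_def by blast
qed

lemma nilpotent_principal_ideal_central:
  assumes "subsemiring R" "c \<in> center" "c ^ n = 0"
  shows "nilpotent_ideal ((*) c ` R)"
  unfolding nilpotent_ideal_def
proof (intro exI[of _ "Suc n"] conjI allI impI)
  fix xs :: "'a list"
  assume "length xs = Suc n \<and> set xs \<subseteq> (*) c ` R"
  with prod_list_principal_ideal_central[OF assms(1,2)]
  obtain t where "prod_list xs = c * c ^ n * t"
    by fastforce
  then show "prod_list xs = 0"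
    by (simp add: assms(3))
qed simp

lemma central_nilpotent_eq_0_if_semiprime_on:
  assumes "semiprime_on R" "subsemiring R" "c \<in> R" "c \<in> center" "c ^ n = 0"
  shows "c = 0"
proof -
  have "(*) c ` R = {0}"
    using assms principal_ideal_central nilpotent_principal_ideal_central
    unfolding semiprime_on_def by blast
  moreover have "c \<in> (*) c ` R"
    using assms(2) unfolding subsemiring_def by (metis image_eqI mult_1_right)
  ultimately show ?thesis by blast
qed

lemma no_nonzero_nilpotents_if_central:
  assumes "centrally_essential TYPE('a::{semiring_0,monoid_mult})"
    and "\<And>c::'a. \<And>n. c \<in> center \<Longrightarrow> c ^ n = 0 \<Longrightarrow> c = 0"
  shows "no_nonzero_nilpotents TYPE('a)"
  unfolding no_nonzero_nilpotents_def
proof (intro allI impI)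
  fix x :: 'a
  assume "\<exists>n. x ^ n = 0"
  then obtain n where n: "x ^ n = 0" by blast
  show "x = 0"
  proof (rule ccontr)
    assume "x \<noteq> 0"
    then obtain y z where yz: "y \<in> center" "z \<in> center" "z \<noteq> 0" "x * y = z"
      using assms(1) unfolding centrally_essential_def by blast
    have "z ^ n = 0"
      using power_mult_central[OF yz(1), of x n] n yz(4) by simp
    then show False
      using assms(2) yz(2,3) by blast
  qed
qed

lemma no_nonzero_nilpotents_if_semiprime_on:
  assumes "centrally_essential TYPE('a::{semiring_0,monoid_mult})"
    and "semiprime_on R" "subsemiring R" "center \<subseteq> (R :: 'a set)"
  shows "no_nonzero_nilpotents TYPE('a)"
proof (rule no_nonzero_nilpotents_if_central[OF assms(1)])
  fix c :: 'a and n
  assume "c \<in> center" "c ^ n = 0"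
  then show "c = 0"
    using central_nilpotent_eq_0_if_semiprime_on[OF assms(2,3)] assms(4) by blast
qed

lemma central_commutator_defect_eq_0:
  fixes a b z :: "'a::{semiring_0,monoid_mult}"
  assumes ce: "centrally_essential TYPE('a)"
    and ac: "add_cancellative TYPE('a)"
    and red: "no_nonzero_nilpotents TYPE('a)"
    and eq: "a * b + z = b * a" and z: "z \<in> center"
  shows "z = 0"
proof -
  have zcomm: "s * z = z * s" for s
    using z by (rule center_commute)
  have "(a * b + z) * z = b * a * z"
    using eq by simp
  then have eq_az: "(a * z) * b + z * z = b * (a * z)"
    by (simp add: distrib_right mult.assoc zcomm[of b])
  show ?thesis
  proof (cases "a * z = 0")
    case True
    then have "z * z = 0"
      using eq_az by simp
    then show ?thesis
      by (rule square_eq_0_imp_eq_0[OF red])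
  next
    case False
    then obtain c w where cw: "c \<in> center" "w \<in> center" "w \<noteq> 0" "a * z * c = w"
      using ce unfolding centrally_essential_def by blast
    have ccomm: "s * c = c * s" for s
      using cw(1) by (rule center_commute)
    have "a * z * b * c = w * b"
      by (metis cw(4) ccomm mult.assoc)
    moreover have "b * (a * z) * c = w * b"
      by (metis cw(4) center_commute[OF cw(2)] mult.assoc)
    moreover have "(a * z * b + z * z) * c = b * (a * z) * c"
      using eq_az by simp
    ultimately have "w * b + z * z * c = w * b"
      by (simp add: distrib_right)
    then have zzc: "z * z * c = 0"
      by (rule add_right_eq_self_imp_eq_0[OF ac])
    have "w * w = a * (z * c * a) * (z * c)"
      by (simp add: cw(4)[symmetric] mult.assoc)
    also have "\<dots> = a * a * (z * (c * z)) * c"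
      by (metis zcomm ccomm mult.assoc)
    also have "\<dots> = a * a * (z * z * c) * c"
      by (simp add: ccomm[of z] mult.assoc)
    finally have "w * w = 0"
      by (simp add: zzc)
    then show ?thesis
      using square_eq_0_imp_eq_0[OF red] cw(3) by blast
  qed
qed

lemma commutator_defect_eq_0:
  fixes a b x :: "'a::{semiring_0,monoid_mult}"
  assumes ce: "centrally_essential TYPE('a)"
    and ac: "add_cancellative TYPE('a)"
    and red: "no_nonzero_nilpotents TYPE('a)"
    and eq: "a * b + x = b * a"
  shows "x = 0"
proof (rule ccontr)
  assume "x \<noteq> 0"
  then obtain c z where cz: "c \<in> center" "z \<in> center" "z \<noteq> 0" "x * c = z"
    using ce unfolding centrally_essential_def by blast
  have "(a * b + x) * c = b * a * c"
    using eq by simp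
  then have "a * (b * c) + z = (b * c) * a"
    using cz(4) center_commute[OF cz(1), of a] by (simp add: distrib_right mult.assoc)
  then have "z = 0"
    using central_commutator_defect_eq_0[OF ce ac red _ cz(2)] by blast
  with cz(3) show False by contradiction
qed

lemma commutative_mult_if_no_nonzero_nilpotents:
  assumes "centrally_essential TYPE('a::{semiring_0,monoid_mult})"
    and "add_cancellative TYPE('a)"
    and "semisubtractive TYPE('a)"
    and "no_nonzero_nilpotents TYPE('a)"
  shows "commutative_mult TYPE('a)"
  unfolding commutative_mult_def
proof (intro allI)
  fix a b :: 'a
  show "a * b = b * a"
  proof (rule ccontr)
    assume ne: "a * b \<noteq> b * a"
    then obtain x where "a * b + x = b * a \<or> b * a + x = a * b"
      using assms(3) unfolding semisubtractive_def by blast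
    then show False
    proof
      assume "a * b + x = b * a"
      with commutator_defect_eq_0[OF assms(1,2,4) this] ne show False by simp
    next
      assume "b * a + x = a * b"
      with commutator_defect_eq_0[OF assms(1,2,4) this] ne show False by simp
    qed
  qed
qed

theorem proposition2p1:
  assumes "add_cancellative TYPE('a::{semiring_0,monoid_mult})"
    and "semisubtractive TYPE('a)"
    and "centrally_essential TYPE('a)"
  shows "(semiprime_on (UNIV :: 'a set) \<longleftrightarrow> semiprime_on (center :: 'a set))
       \<and> (semiprime_on (center :: 'a set) \<longleftrightarrow> no_nonzero_nilpotents TYPE('a))
       \<and> (no_nonzero_nilpotents TYPE('a) \<longleftrightarrow>
            (commutative_mult TYPE('a) \<and> no_nonzero_nilpotents TYPE('a)))"
proof -
  have "semiprime_on (UNIV :: 'a set) \<longleftrightarrow> no_nonzero_nilpotents TYPE('a)"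
    using no_nonzero_nilpotents_if_semiprime_on[OF assms(3) _ subsemiring_UNIV]
      semiprime_on_if_no_nonzero_nilpotents by blast
  moreover have "semiprime_on (center :: 'a set) \<longleftrightarrow> no_nonzero_nilpotents TYPE('a)"
    using no_nonzero_nilpotents_if_semiprime_on[OF assms(3) _ subsemiring_center]
      semiprime_on_if_no_nonzero_nilpotents by blast
  moreover have "no_nonzero_nilpotents TYPE('a) \<Longrightarrow> commutative_mult TYPE('a)"
    by (rule commutative_mult_if_no_nonzero_nilpotents[OF assms(3,1,2)])
  ultimately show ?thesis
    by blast
qed

end
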